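(* There exists an infinite biosphere $(G,t)$ such that $\mathrm{REF}$ is not downward generic.
   Context: An infinite biosphere is a directed graph $G$ together with a function $t$ assigning a real number $t(v)$ to each vertex, such that: (1) if $v$ is a parent of $w$ (edge from $v$ to $w$) then $t(v)<t(w)$; (2) for every $r\in\mathbb R$ at most finitely many vertices $v$ have $t(v)<r$; (3) every vertex has finitely many children; (4) $G$ is infinite. $w$ is a descendant of $v$ if there is a directed path from $v$ to $w$ of length at least one. $\mathrm{REF}$ is the set of sets $S$ of vertices of $G$ such that every $v\in S$ having infinitely many descendants in $G$ has infinitely many descendants in $S$. For a nonempty linear order $(X,<)$, a descending chain of $G$-subsets indexed by $X$ is a family $\{C_\alpha\}_{\alpha\in X}$ with $C_\beta\subseteq C_\alpha$ whenever $\alpha<\beta$. A set $T$ of $G$-subsets is downward generic if for every descending chain $\{C_\alpha\}_{\alpha\in X}$ of nonempty $G$-subsets with each $C_\alpha\in T$, $\bigcap_\alpha C_\alpha\in T$. *)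

theory Defs
  imports Complex_Main
begin

text \<open>A directed graph is a vertex set V with an edge relation E (an edge (v,w) means
  v is a parent of w).  An infinite biosphere is such a graph with a time function t.\<close>

definition biosphere :: "'v set \<Rightarrow> ('v \<times> 'v) set \<Rightarrow> ('v \<Rightarrow> real) \<Rightarrow> bool" where
  "biosphere V E t \<longleftrightarrow>
     E \<subseteq> V \<times> V \<and>
     (\<forall>v w. (v, w) \<in> E \<longrightarrow> t v < t w) \<and>
     (\<forall>r::real. finite {v \<in> V. t v < r}) \<and>
     (\<forall>v \<in> V. finite {w. (v, w) \<in> E}) \<and>
     infinite V"

definition descendants :: "('v \<times> 'v) set \<Rightarrow> 'v \<Rightarrow> 'v set" where
  "descendants E v = {w. (v, w) \<in> E\<^sup>+}"

definition REF :: "'v set \<Rightarrow> ('v \<times> 'v) set \<Rightarrow> 'v set set" where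
  "REF V E = {S. S \<subseteq> V \<and>
     (\<forall>v \<in> S. infinite (descendants E v) \<longrightarrow> infinite (descendants E v \<inter> S))}"

text \<open>Full downward genericity quantifies over all index types.\<close>
definition downward_generic_idx :: "'i::linorder itself \<Rightarrow> 'v set \<Rightarrow> 'v set set \<Rightarrow> bool" where
  "downward_generic_idx _ V T \<longleftrightarrow>
     (\<forall>(X::'i set) (C::'i \<Rightarrow> 'v set).
        X \<noteq> {} \<longrightarrow>
        (\<forall>\<alpha>\<in>X. \<forall>\<beta>\<in>X. \<alpha> < \<beta> \<longrightarrow> C \<beta> \<subseteq> C \<alpha>) \<longrightarrow>
        (\<forall>\<alpha>\<in>X. C \<alpha> \<subseteq> V \<and> C \<alpha> \<noteq> {} \<and> C \<alpha> \<in> T) \<longrightarrow>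
        (\<Inter>\<alpha>\<in>X. C \<alpha>) \<in> T)"

end

theory Submission
  imports Defs
begin

text \<open>Take the path 0 \<rightarrow> 1 \<rightarrow> 2 \<rightarrow> \<dots> with t(n) = n. Every vertex has infinitely many
  descendants, so a set of vertices lies in REF exactly when it is empty or infinite. The sets
  {0} \<union> {n..} form a descending chain of infinite sets, but their intersection {0} is finite
  and nonempty.\<close>

lemma biosphere_pred_nat: "biosphere UNIV pred_nat real"
  unfolding biosphere_def
proof (intro conjI allI impI ballI)
  fix r :: real
  have "{v \<in> UNIV. real v < r} \<subseteq> {..nat \<lceil>r\<rceil>}"
    by auto linarith
  then show "finite {v \<in> UNIV. real v < r}"
    using finite_subset by blast
next
  fix v :: nat
  have "{w. (v, w) \<in> pred_nat} = {Suc v}"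
    by (simp add: pred_nat_def)
  then show "finite {w. (v, w) \<in> pred_nat}"
    by simp
qed (auto simp: pred_nat_def)

lemma descendants_pred_nat: "descendants pred_nat n = {n<..}"
  by (auto simp: descendants_def less_eq)

lemma REF_pred_nat_iff: "S \<in> REF UNIV pred_nat \<longleftrightarrow> S = {} \<or> infinite S"
proof -
  have "infinite ({v<..} \<inter> S) \<longleftrightarrow> infinite S" for v :: nat
  proof -
    have "{v<..} \<inter> S = S - {..v}"
      by auto
    then show ?thesis
      using Diff_infinite_finite[of "{..v}" S] by (auto intro: finite_subset)
  qed
  then show ?thesis
    by (auto simp: REF_def descendants_pred_nat infinite_Ioi)
qed

lemma INT_insert_atLeast: "(\<Inter>n. insert a {n::nat..}) = {a}"
proof -
  have "x \<notin> {Suc x..}" for x :: nat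
    by simp
  then show ?thesis
    by blast
qed

theorem mainTheorem8:
  shows "\<exists>(V::nat set) E t. biosphere V E t \<and> \<not> downward_generic_idx TYPE(nat) V (REF V E)"
proof (intro exI conjI)
  show "biosphere UNIV pred_nat real"
    by (rule biosphere_pred_nat)
  define C where "C n = insert 0 {n::nat..}" for n
  have descending: "\<forall>\<alpha>\<in>UNIV. \<forall>\<beta>\<in>UNIV. \<alpha> < \<beta> \<longrightarrow> C \<beta> \<subseteq> C \<alpha>"
    by (auto simp: C_def)
  have members: "\<forall>\<alpha>\<in>UNIV. C \<alpha> \<subseteq> UNIV \<and> C \<alpha> \<noteq> {} \<and> C \<alpha> \<in> REF UNIV pred_nat"
    by (simp add: C_def REF_pred_nat_iff infinite_Ici)
  have "(\<Inter>\<alpha>\<in>UNIV. C \<alpha>) \<notin> REF UNIV pred_nat"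
    unfolding C_def INT_insert_atLeast by (simp add: REF_pred_nat_iff)
  with descending members show "\<not> downward_generic_idx TYPE(nat) UNIV (REF UNIV pred_nat)"
    unfolding downward_generic_idx_def by (metis UNIV_not_empty)
qed

end
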